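(* Let $\beta\in(0,\tfrac12)$ and let $\lambda\in(0,1)$ be a principal eigenvalue of $\Delta_\beta$ with a non-negative eigenfunction $u$. Then the function $\bar u(x)=m^{-|x|}\sum_{y\in\mathbb{T}_m:\,|y|=|x|}u(y)$ is a strictly positive eigenfunction associated with $\lambda$ (in particular $\lim_{x\to y}\bar u(x)=0$ for every branch $y$), it is constant on each level, and it is strictly decreasing with respect to the level.
   Context: Tree: for an integer $m\ge2$, $\mathbb{T}_m$ has vertices the root $\emptyset$ and all finite sequences $(\emptyset,a_1,\dots,a_k)$, $a_i\in\{0,\dots,m-1\}$; $|x|$ is the level, successors of $x$ are $(x,i)$, $\hat x$ is the immediate predecessor of $x\ne\emptyset$. A branch is an infinite sequence $(x_n)_{n\ge0}$ with $x_0=\emptyset$, $x_{n+1}$ a successor of $x_n$; $\lim_{x\to y}u(x)=\lim_n u(x_n)$ for a branch $y=(x_n)$. Operator: $p_\beta=\beta/(1-\beta)$ for $\beta\in(0,1)$. $\Delta_\beta u(\emptyset)=\frac1m\sum_{i=0}^{m-1}u(\emptyset,i)-u(\emptyset)$ and, for $x\ne\emptyset$, $\Delta_\beta u(x)=\big(\beta u(\hat x)+\frac{1-\beta}{m}\sum_{i=0}^{m-1}u(x,i)-u(x)\big)p_\beta^{-|x|}$. Eigenvalues: $\lambda\in\mathbb{R}$ is an eigenvalue of $\Delta_\beta$ if there is a bounded $u\not\equiv0$ with $-\Delta_\beta u=\lambda u$ on $\mathbb{T}_m$ and $\lim_{x\to y}u(x)=0$ for every branch $y$ ($u$ is an eigenfunction);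 an eigenvalue $\lambda>0$ is principal if it has a non-negative eigenfunction. *)

theory Defs
  imports Complex_Main
begin

text \<open>The root is the empty list, the successors of x are x @ [i] (i < m),
  the predecessor of x is butlast x, the level |x| is length x.\<close>

definition tree :: "nat \<Rightarrow> nat list set" where
  "tree m = {x. \<forall>a\<in>set x. a < m}"

definition pbeta :: "real \<Rightarrow> real" where
  "pbeta \<beta> = \<beta> / (1 - \<beta>)"

definition Delta :: "nat \<Rightarrow> real \<Rightarrow> (nat list \<Rightarrow> real) \<Rightarrow> nat list \<Rightarrow> real" where
  "Delta m \<beta> u x =
     (if x = [] then (1 / real m) * (\<Sum>i<m. u [i]) - u []
      else (\<beta> * u (butlast x) + ((1 - \<beta>) / real m) * (\<Sum>i<m. u (x @ [i])) - u x)
           * (inverse (pbeta \<beta>)) ^ length x)"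

definition branch :: "nat \<Rightarrow> (nat \<Rightarrow> nat list) \<Rightarrow> bool" where
  "branch m X \<longleftrightarrow> X 0 = [] \<and> (\<forall>n. \<exists>i<m. X (Suc n) = X n @ [i])"

definition eigenfunction :: "nat \<Rightarrow> real \<Rightarrow> real \<Rightarrow> (nat list \<Rightarrow> real) \<Rightarrow> bool" where
  "eigenfunction m \<beta> lam u \<longleftrightarrow>
     (\<exists>C. \<forall>x\<in>tree m. \<bar>u x\<bar> \<le> C) \<and>
     (\<exists>x\<in>tree m. u x \<noteq> 0) \<and>
     (\<forall>x\<in>tree m. - Delta m \<beta> u x = lam * u x) \<and>
     (\<forall>X. branch m X \<longrightarrow> (\<lambda>n. u (X n)) \<longlonglongrightarrow> 0)"

definition eigenvalue :: "nat \<Rightarrow> real \<Rightarrow> real \<Rightarrow> bool" where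
  "eigenvalue m \<beta> lam \<longleftrightarrow> (\<exists>u. eigenfunction m \<beta> lam u)"

definition principal_eigenvalue :: "nat \<Rightarrow> real \<Rightarrow> real \<Rightarrow> bool" where
  "principal_eigenvalue m \<beta> lam \<longleftrightarrow>
     lam > 0 \<and> (\<exists>u. eigenfunction m \<beta> lam u \<and> (\<forall>x\<in>tree m. u x \<ge> 0))"

definition level_avg :: "nat \<Rightarrow> (nat list \<Rightarrow> real) \<Rightarrow> nat list \<Rightarrow> real" where
  "level_avg m u x = (1 / real m) ^ length x * (\<Sum>y\<in>{y\<in>tree m. length y = length x}. u y)"

end

theory Submission
  imports Defs
begin

text \<open>Summing the eigenvalue equation over a level shows that the level means \<open>V n\<close> of \<open>u\<close>
  solve its radial form (with \<open>p = \<beta> / (1 - \<beta>)\<close>)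
  \<open>\<beta> V n + (1 - \<beta>) V (n + 2) - V (n + 1) = - \<lambda> p^(n + 1) V (n + 1)\<close>, \<open>V 1 = (1 - \<lambda>) V 0\<close>,
  so \<open>x \<mapsto> V |x|\<close> is again an eigenfunction as soon as \<open>V n \<rightarrow> 0\<close>. Written as
  \<open>(1 - \<beta>) (V (n + 1) - V (n + 2)) = \<beta> (V n - V (n + 1)) + \<lambda> p^(n + 1) V (n + 1)\<close>,
  the recurrence shows by induction that \<open>V\<close> decreases strictly once \<open>V 0 > 0\<close>, which holds
  because \<open>u \<ge> 0\<close> and \<open>u \<noteq> 0\<close>. For \<open>V n \<rightarrow> 0\<close>, follow the branch that always moves to a
  child maximising \<open>u\<close>: along it \<open>u\<close> is a supersolution of the radial recurrence starting at
  \<open>V 0\<close>, so it dominates \<open>V\<close> by a Wronskian comparison, and \<open>u\<close> tends to zero along it.\<close>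

definition tree_level :: "nat \<Rightarrow> nat \<Rightarrow> nat list set" where
  "tree_level m n = {y \<in> tree m. length y = n}"

definition level_mean :: "nat \<Rightarrow> (nat list \<Rightarrow> real) \<Rightarrow> nat \<Rightarrow> real" where
  "level_mean m u n = (1 / real m) ^ n * (\<Sum>y\<in>tree_level m n. u y)"

lemma level_avg_eq_level_mean: "level_avg m u = (\<lambda>x. level_mean m u (length x))"
  by (simp add: fun_eq_iff level_avg_def level_mean_def tree_level_def)

lemma tree_snoc_iff: "x @ [i] \<in> tree m \<longleftrightarrow> x \<in> tree m \<and> i < m"
  by (auto simp: tree_def)

lemma tree_level_0: "tree_level m 0 = {[]}"
  by (auto simp: tree_level_def tree_def)

lemma finite_tree_level: "finite (tree_level m n)"
proof -
  have "tree_level m n = {xs. set xs \<subseteq> {..<m} \<and> length xs = n}"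
    by (auto simp: tree_level_def tree_def)
  then show ?thesis
    using finite_lists_length_eq[of "{..<m}" n] by simp
qed

lemma tree_level_Suc:
  "tree_level m (Suc n) = (\<lambda>(x, i). x @ [i]) ` (tree_level m n \<times> {..<m})"
proof (intro set_eqI iffI)
  fix y assume y: "y \<in> tree_level m (Suc n)"
  then have "y = butlast y @ [last y]"
    by (cases y rule: rev_cases) (auto simp: tree_level_def)
  moreover from this have "butlast y \<in> tree_level m n" "last y < m"
    using y tree_snoc_iff[of "butlast y" "last y" m] by (auto simp: tree_level_def)
  ultimately show "y \<in> (\<lambda>(x, i). x @ [i]) ` (tree_level m n \<times> {..<m})"
    by (intro image_eqI[of _ _ "(butlast y, last y)"]) auto
qed (auto simp: tree_level_def tree_snoc_iff)

lemma sum_tree_level_Suc: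
  "(\<Sum>y\<in>tree_level m (Suc n). f y) = (\<Sum>x\<in>tree_level m n. \<Sum>i<m. f (x @ [i]))"
proof -
  have "inj_on (\<lambda>(x, i). x @ [i]) (tree_level m n \<times> {..<m})"
    by (auto simp: inj_on_def)
  then show ?thesis
    by (simp add: tree_level_Suc sum.reindex sum.cartesian_product split_def)
qed

lemma branch_SucE:
  assumes "branch m X"
  obtains i where "i < m" "X (Suc n) = X n @ [i]"
  using assms by (auto simp: branch_def)

lemma branch_length_in_tree:
  assumes "branch m X"
  shows "length (X n) = n \<and> X n \<in> tree m"
proof (induction n)
  case 0
  then show ?case
    using assms by (simp add: branch_def tree_def)
next
  case (Suc n)
  obtain i where "i < m" "X (Suc n) = X n @ [i]"
    using assms by (rule branch_SucE)
  with Suc show ?case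
    by (simp add: tree_snoc_iff)
qed

lemma branch_length: "branch m X \<Longrightarrow> length (X n) = n"
  using branch_length_in_tree by blast

lemma branch_in_tree: "branch m X \<Longrightarrow> X n \<in> tree m"
  using branch_length_in_tree by blast

lemma branch_butlast: "branch m X \<Longrightarrow> butlast (X (Suc n)) = X n"
  by (metis branch_SucE butlast_snoc)

lemma exists_maximal_child:
  fixes f :: "nat list \<Rightarrow> real"
  assumes "0 < m"
  shows "\<exists>i<m. \<forall>j<m. f (x @ [j]) \<le> f (x @ [i])"
proof -
  have "Max ((\<lambda>j. f (x @ [j])) ` {..<m}) \<in> (\<lambda>j. f (x @ [j])) ` {..<m}"
    by (rule Max_in) (use assms in auto)
  then obtain i where "i \<in> {..<m}" "f (x @ [i]) = Max ((\<lambda>j. f (x @ [j])) ` {..<m})"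
    by auto
  then show ?thesis
    by (metis Max_ge finite_imageI finite_lessThan image_eqI lessThan_iff)
qed

lemma obtain_branch_of_maximal_children:
  fixes f :: "nat list \<Rightarrow> real"
  assumes "0 < m"
  obtains X where "branch m X" "\<And>n j. j < m \<Longrightarrow> f (X n @ [j]) \<le> f (X (Suc n))"
proof -
  obtain ch where ch: "\<And>x. ch x < m \<and> (\<forall>j<m. f (x @ [j]) \<le> f (x @ [ch x]))"
    using exists_maximal_child[OF assms] by metis
  define X where "X = rec_nat [] (\<lambda>_ x. x @ [ch x])"
  have "branch m X"
    using ch by (auto simp: branch_def X_def)
  moreover have "f (X n @ [j]) \<le> f (X (Suc n))" if "j < m" for n j
    using ch that by (simp add: X_def)
  ultimately show ?thesis
    using that by blast
qed

subsection \<open>The eigenvalue equation\<close>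

lemma inverse_pbeta_power_cancel:
  assumes "0 < \<beta>" "\<beta> < 1"
  shows "inverse (pbeta \<beta>) ^ k * pbeta \<beta> ^ k = 1"
  using assms by (simp add: pbeta_def power_mult_distrib[symmetric])

lemma eigen_equation_nonroot:
  assumes "0 < \<beta>" "\<beta> < 1" "x \<noteq> []"
  shows "- Delta m \<beta> u x = lam * u x \<longleftrightarrow>
    \<beta> * u (butlast x) + (1 - \<beta>) / real m * (\<Sum>i<m. u (x @ [i])) - u x
      = - (lam * pbeta \<beta> ^ length x) * u x"
    (is "_ \<longleftrightarrow> ?E = _")
proof -
  let ?p = "pbeta \<beta> ^ length x"
  have "?p \<noteq> 0"
    using assms by (simp add: pbeta_def)
  then have "- Delta m \<beta> u x = lam * u x \<longleftrightarrow> - Delta m \<beta> u x * ?p = lam * u x * ?p"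
    by (metis mult_cancel_right)
  also have "- Delta m \<beta> u x * ?p = - (?E * (inverse (pbeta \<beta>) ^ length x * ?p))"
    by (simp only: Delta_def if_not_P[OF assms(3)] minus_mult_left mult.assoc)
  also have "\<dots> = - ?E"
    by (simp add: inverse_pbeta_power_cancel[OF assms(1,2)])
  finally show ?thesis
    by (auto simp: algebra_simps)
qed

lemma level_mean_root:
  assumes "\<forall>x\<in>tree m. - Delta m \<beta> u x = lam * u x"
  shows "level_mean m u 1 = (1 - lam) * level_mean m u 0"
  using assms[THEN bspec, of "[]"] sum_tree_level_Suc[where f = u and m = m and n = 0]
  by (simp add: Delta_def level_mean_def tree_level_0 tree_def algebra_simps)

lemma level_mean_recurrence:
  assumes "0 < m" "0 < \<beta>" "\<beta> < 1" and eq: "\<forall>x\<in>tree m. - Delta m \<beta> u x = lam * u x"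
  defines "V \<equiv> level_mean m u"
  shows "\<beta> * V n + (1 - \<beta>) * V (Suc (Suc n)) - V (Suc n)
    = - (lam * pbeta \<beta> ^ Suc n) * V (Suc n)"
proof -
  define S where "S k = (\<Sum>y\<in>tree_level m k. u y)" for k
  have "(\<Sum>y\<in>tree_level m (Suc n).
          \<beta> * u (butlast y) + (1 - \<beta>) / real m * (\<Sum>i<m. u (y @ [i])) - u y)
      = (\<Sum>y\<in>tree_level m (Suc n). - (lam * pbeta \<beta> ^ Suc n) * u y)"
  proof (rule sum.cong)
    fix x assume "x \<in> tree_level m (Suc n)"
    then have "x \<in> tree m" "x \<noteq> []" "length x = Suc n"
      by (auto simp: tree_level_def)
    then show "\<beta> * u (butlast x) + (1 - \<beta>) / real m * (\<Sum>i<m. u (x @ [i])) - u x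
        = - (lam * pbeta \<beta> ^ Suc n) * u x"
      using eq eigen_equation_nonroot[OF assms(2,3) \<open>x \<noteq> []\<close>, of m u lam] by metis
  qed simp
  moreover have "(\<Sum>y\<in>tree_level m (Suc n). u (butlast y)) = real m * S n"
    by (simp add: sum_tree_level_Suc S_def sum_distrib_left)
  moreover have "(\<Sum>y\<in>tree_level m (Suc n). \<Sum>i<m. u (y @ [i])) = S (Suc (Suc n))"
    by (simp add: sum_tree_level_Suc S_def)
  ultimately have S_rec: "\<beta> * (real m * S n) + (1 - \<beta>) / real m * S (Suc (Suc n)) - S (Suc n)
      = - (lam * pbeta \<beta> ^ Suc n) * S (Suc n)"
    unfolding sum_subtractf sum.distrib sum_distrib_left[symmetric] S_def by simp
  define q where "q = (1 / real m) ^ Suc n"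
  have V_S: "V n = real m * q * S n" "V (Suc n) = q * S (Suc n)"
    "V (Suc (Suc n)) = q / real m * S (Suc (Suc n))"
    using assms(1) by (simp_all add: V_def level_mean_def S_def q_def)
  then have "\<beta> * V n + (1 - \<beta>) * V (Suc (Suc n)) - V (Suc n)
      = q * (\<beta> * (real m * S n) + (1 - \<beta>) / real m * S (Suc (Suc n)) - S (Suc n))"
    by (simp add: algebra_simps)
  also have "\<dots> = q * (- (lam * pbeta \<beta> ^ Suc n) * S (Suc n))"
    by (simp only: S_rec)
  finally show ?thesis
    by (simp add: V_S(2) algebra_simps)
qed

lemma radial_eigen_equation:
  assumes "0 < m" "0 < \<beta>" "\<beta> < 1"
    and root: "V 1 = (1 - lam) * V 0"
    and rec: "\<And>n. \<beta> * V n + (1 - \<beta>) * V (Suc (Suc n)) - V (Suc n)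
                   = - (lam * pbeta \<beta> ^ Suc n) * V (Suc n)"
  shows "- Delta m \<beta> (\<lambda>x. V (length x)) x = lam * V (length x)"
proof (cases x rule: rev_cases)
  case Nil
  then show ?thesis
    using assms(1) root by (simp add: Delta_def algebra_simps)
next
  case (snoc y i)
  then have "\<beta> * V (length y) + (1 - \<beta>) / real m * (\<Sum>i<m. V (length (x @ [i])))
      - V (length x) = - (lam * pbeta \<beta> ^ length x) * V (length x)"
    using assms(1) rec[of "length y"] by simp
  then show ?thesis
    using snoc eigen_equation_nonroot[OF assms(2,3), of x m "\<lambda>x. V (length x)" lam] by simp
qed

lemma radial_eigenfunction:
  assumes "0 < m" "0 < \<beta>" "\<beta> < 1"
    and root: "V 1 = (1 - lam) * V 0"
    and rec: "\<And>n. \<beta> * V n + (1 - \<beta>) * V (Suc (Suc n)) - V (Suc n)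
                   = - (lam * pbeta \<beta> ^ Suc n) * V (Suc n)"
    and "V 0 \<noteq> 0" and lim: "V \<longlonglongrightarrow> 0"
  shows "eigenfunction m \<beta> lam (\<lambda>x. V (length x))"
proof -
  obtain C where "\<And>n. \<bar>V n\<bar> \<le> C"
    using convergent_imp_Bseq[OF convergentI[OF lim]] by (auto simp: Bseq_def)
  moreover have "(\<lambda>n. V (length (X n))) \<longlonglongrightarrow> 0" if "branch m X" for X
    using lim branch_length[OF that] by simp
  ultimately show ?thesis
    unfolding eigenfunction_def
    using radial_eigen_equation[OF assms(1-3) root rec] \<open>V 0 \<noteq> 0\<close>
    by (auto simp: tree_def intro!: exI[of _ "[]"])
qed

subsection \<open>The radial recurrence\<close>

context
  fixes \<beta> :: real and c V :: "nat \<Rightarrow> real"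
  assumes beta: "0 < \<beta>" "\<beta> < 1"
    and rec: "\<And>n. \<beta> * V n + (1 - \<beta>) * V (Suc (Suc n)) - V (Suc n) = - c n * V (Suc n)"
begin

lemma radial_recurrence_differences:
  "(1 - \<beta>) * (V (Suc n) - V (Suc (Suc n))) = \<beta> * (V n - V (Suc n)) + c n * V (Suc n)"
  using rec[of n] by (simp add: algebra_simps)

lemma radial_solution_antimono:
  assumes "\<And>n. 0 \<le> c n" "\<And>n. 0 \<le> V n" "V 1 \<le> V 0"
  shows "V (Suc n) \<le> V n"
proof (induction n)
  case (Suc n)
  then have "0 \<le> (1 - \<beta>) * (V (Suc n) - V (Suc (Suc n)))"
    using radial_recurrence_differences[of n] beta assms(1,2) by simp
  then show ?case
    using beta by (simp add: zero_le_mult_iff)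
qed (use assms in simp)

lemma radial_solution_strict_decreasing:
  assumes "\<And>n. 0 \<le> c n" "\<And>n. 0 \<le> V n" "V 1 < V 0"
  shows "V (Suc n) < V n"
proof (induction n)
  case (Suc n)
  then have "0 < (1 - \<beta>) * (V (Suc n) - V (Suc (Suc n)))"
    using radial_recurrence_differences[of n] beta assms(1,2)
    by (smt (verit) mult_nonneg_nonneg mult_pos_pos)
  then show ?case
    using beta by (simp add: zero_less_mult_iff)
qed (use assms in simp)

text \<open>The Wronskian \<open>K n = e (n + 1) V n - e n V (n + 1)\<close> of \<open>V\<close> and \<open>e = a - V\<close>
  satisfies \<open>(1 - \<beta>) K (n + 1) \<ge> \<beta> K n\<close>, so it stays non-negative, and then so does \<open>e\<close>.\<close>

lemma radial_supersolution_ge: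
  assumes pos: "\<And>n. 0 < V n"
    and super: "\<And>n. \<beta> * a n + (1 - \<beta>) * a (Suc (Suc n)) - a (Suc n) \<ge> - c n * a (Suc n)"
    and init: "a 0 = V 0" "V 1 \<le> a 1"
  shows "V n \<le> a n"
proof -
  define e where "e n = a n - V n" for n
  define K where "K n = e (Suc n) * V n - e n * V (Suc n)" for n
  have K_step: "\<beta> * K n \<le> (1 - \<beta>) * K (Suc n)" for n
  proof -
    have super_e: "((1 - c n) * e (Suc n) - \<beta> * e n) * V (Suc n)
        \<le> (1 - \<beta>) * e (Suc (Suc n)) * V (Suc n)"
      using super[of n] rec[of n] pos[of "Suc n"] unfolding e_def
      by (intro mult_right_mono) (simp_all add: algebra_simps)
    have rec': "(1 - \<beta>) * V (Suc (Suc n)) = (1 - c n) * V (Suc n) - \<beta> * V n"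
      using rec[of n] by (simp add: algebra_simps)
    have "\<beta> * K n = ((1 - c n) * e (Suc n) - \<beta> * e n) * V (Suc n)
        - e (Suc n) * ((1 - c n) * V (Suc n) - \<beta> * V n)"
      by (simp add: K_def algebra_simps)
    also have "\<dots> \<le> (1 - \<beta>) * e (Suc (Suc n)) * V (Suc n)
        - e (Suc n) * ((1 - c n) * V (Suc n) - \<beta> * V n)"
      using super_e by linarith
    also have "\<dots> = (1 - \<beta>) * K (Suc n)"
      unfolding rec'[symmetric] by (simp add: K_def algebra_simps)
    finally show ?thesis .
  qed
  have K_nonneg: "0 \<le> K n" for n
  proof (induction n)
    case 0
    then show ?case
      using init pos[of 0] by (simp add: K_def e_def)
  next
    case (Suc n)
    then show ?case
      using K_step[of n] beta by (smt (verit) mult_nonneg_nonneg zero_le_mult_iff)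
  qed
  have "0 \<le> e n"
  proof (induction n)
    case 0
    then show ?case
      using init by (simp add: e_def)
  next
    case (Suc n)
    then have "0 \<le> e (Suc n) * V n"
      using K_nonneg[of n] pos[of "Suc n"] by (simp add: K_def) (smt (verit) mult_nonneg_nonneg)
    then show ?case
      using pos[of n] by (simp add: zero_le_mult_iff)
  qed
  then show ?thesis
    by (simp add: e_def)
qed

end

subsection \<open>Level means of a non-negative eigenfunction\<close>

lemma level_mean_nonneg:
  "(\<And>x. x \<in> tree m \<Longrightarrow> 0 \<le> u x) \<Longrightarrow> 0 \<le> level_mean m u n"
  unfolding level_mean_def tree_level_def by (intro mult_nonneg_nonneg sum_nonneg) auto

lemma level_mean_strict_decreasing:
  assumes "0 < m" "0 < \<beta>" "\<beta> < 1" "0 < lam"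
    and eq: "\<forall>x\<in>tree m. - Delta m \<beta> u x = lam * u x"
    and nonneg: "\<And>x. x \<in> tree m \<Longrightarrow> 0 \<le> u x"
    and nonzero: "x \<in> tree m" "u x \<noteq> 0"
  shows "level_mean m u (Suc n) < level_mean m u n"
proof -
  let ?V = "level_mean m u"
  note rec = level_mean_recurrence[OF assms(1-3) eq]
  have V_nonneg: "0 \<le> ?V k" for k
    using level_mean_nonneg[of m u] nonneg by blast
  have c_nonneg: "0 \<le> lam * pbeta \<beta> ^ Suc k" for k
    using assms(2-4) by (simp add: pbeta_def)
  have root: "?V 1 = ?V 0 - lam * ?V 0"
    using level_mean_root[OF eq] by (simp add: algebra_simps)
  have "0 < ?V 0"
  proof (rule ccontr)
    assume "\<not> 0 < ?V 0"
    moreover have "0 \<le> lam * ?V 0"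
      using assms(4) V_nonneg by simp
    ultimately have "?V 1 \<le> ?V 0"
      using root by linarith
    then have "decseq ?V"
      using radial_solution_antimono[where c = "\<lambda>k. lam * pbeta \<beta> ^ Suc k",
          OF assms(2,3) rec c_nonneg V_nonneg]
      by (simp add: decseq_SucI)
    then have "?V (length x) \<le> ?V 0"
      using decseqD by blast
    then have "?V (length x) = 0"
      using \<open>\<not> 0 < ?V 0\<close> V_nonneg[of 0] V_nonneg[of "length x"] by linarith
    then have "(\<Sum>y\<in>tree_level m (length x). u y) = 0"
      using assms(1) by (simp add: level_mean_def)
    moreover have "x \<in> tree_level m (length x)"
      using nonzero(1) by (simp add: tree_level_def)
    ultimately have "u x = 0"
      using sum_nonneg_eq_0_iff[OF finite_tree_level] nonneg
      by (metis (no_types, lifting) mem_Collect_eq tree_level_def)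
    then show False
      using nonzero(2) by simp
  qed
  then have "?V 1 < ?V 0"
    using root assms(4) by (simp add: mult_pos_pos)
  then show ?thesis
    using radial_solution_strict_decreasing[where c = "\<lambda>k. lam * pbeta \<beta> ^ Suc k",
        OF assms(2,3) rec c_nonneg V_nonneg]
    by blast
qed

lemma level_mean_tendsto_zero:
  assumes "0 < m" "0 < \<beta>" "\<beta> < 1"
    and eq: "\<forall>x\<in>tree m. - Delta m \<beta> u x = lam * u x"
    and lim: "\<forall>X. branch m X \<longrightarrow> (\<lambda>n. u (X n)) \<longlonglongrightarrow> 0"
    and pos: "\<And>n. 0 < level_mean m u n"
  shows "level_mean m u \<longlonglongrightarrow> 0"
proof -
  let ?V = "level_mean m u"
  obtain X where X: "branch m X"
    and max_child: "\<And>n j. j < m \<Longrightarrow> u (X n @ [j]) \<le> u (X (Suc n))"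
    using obtain_branch_of_maximal_children[OF assms(1)] by blast
  define a where "a n = u (X n)" for n
  have children_sum: "(\<Sum>j<m. u (X n @ [j])) \<le> real m * a (Suc n)" for n
  proof -
    have "(\<Sum>j<m. u (X n @ [j])) \<le> (\<Sum>j<m. a (Suc n))"
      by (rule sum_mono) (simp add: a_def max_child)
    then show ?thesis
      by simp
  qed
  have super: "\<beta> * a n + (1 - \<beta>) * a (Suc (Suc n)) - a (Suc n)
      \<ge> - (lam * pbeta \<beta> ^ Suc n) * a (Suc n)" for n
  proof -
    have "X (Suc n) \<noteq> []"
      using branch_length[OF X, of "Suc n"] by auto
    then have "\<beta> * u (butlast (X (Suc n))) + (1 - \<beta>) / real m * (\<Sum>j<m. u (X (Suc n) @ [j]))
        - u (X (Suc n)) = - (lam * pbeta \<beta> ^ length (X (Suc n))) * u (X (Suc n))"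
      using eq branch_in_tree[OF X] eigen_equation_nonroot[OF assms(2,3), of "X (Suc n)" m u lam]
      by metis
    then have "\<beta> * a n + (1 - \<beta>) / real m * (\<Sum>j<m. u (X (Suc n) @ [j])) - a (Suc n)
        = - (lam * pbeta \<beta> ^ Suc n) * a (Suc n)"
      by (simp only: a_def branch_butlast[OF X] branch_length[OF X])
    moreover have "(1 - \<beta>) / real m * (\<Sum>j<m. u (X (Suc n) @ [j]))
        \<le> (1 - \<beta>) * a (Suc (Suc n))"
      using mult_left_mono[OF children_sum[of "Suc n"], of "(1 - \<beta>) / real m"] assms(1,3)
      by simp
    ultimately show ?thesis
      by linarith
  qed
  have "X 0 = []"
    using X by (simp add: branch_def)
  then have init_0: "a 0 = ?V 0"
    by (simp add: a_def level_mean_def tree_level_0)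
  have "?V 1 = (\<Sum>j<m. u (X 0 @ [j])) / real m"
    using \<open>X 0 = []\<close> sum_tree_level_Suc[where f = u and m = m and n = 0]
    by (simp add: level_mean_def tree_level_0)
  then have init_1: "?V 1 \<le> a 1"
    using children_sum[of 0] assms(1) by (simp add: pos_divide_le_eq mult.commute)
  have V_le_a: "?V n \<le> a n" for n
    using radial_supersolution_ge[where c = "\<lambda>k. lam * pbeta \<beta> ^ Suc k",
        OF assms(2,3) level_mean_recurrence[OF assms(1-3) eq] pos super init_0 init_1] .
  have "a \<longlonglongrightarrow> 0"
    unfolding a_def using lim X by blast
  show ?thesis
  proof (rule tendsto_sandwich[of "\<lambda>_. 0" _ _ a])
    show "\<forall>\<^sub>F n in sequentially. 0 \<le> ?V n"
      using pos by (simp add: less_imp_le)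
    show "\<forall>\<^sub>F n in sequentially. ?V n \<le> a n"
      using V_le_a by simp
  qed (use \<open>a \<longlonglongrightarrow> 0\<close> in simp_all)
qed

theorem lemma5p4:
  fixes m :: nat and \<beta> lam :: real and u :: "nat list \<Rightarrow> real"
  assumes "m \<ge> 2"
    and "0 < \<beta>" and "\<beta> < 1/2"
    and "0 < lam" and "lam < 1"
    and "principal_eigenvalue m \<beta> lam"
    and "eigenfunction m \<beta> lam u"
    and "\<forall>x\<in>tree m. u x \<ge> 0"
  shows "eigenfunction m \<beta> lam (level_avg m u)
    \<and> (\<forall>x\<in>tree m. level_avg m u x > 0)
    \<and> (\<forall>x\<in>tree m. \<forall>y\<in>tree m. length x = length y \<longrightarrow> level_avg m u x = level_avg m u y)
    \<and> (\<forall>x\<in>tree m. \<forall>y\<in>tree m. length x < length y \<longrightarrow> level_avg m u x > level_avg m u y)"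
proof -
  have m: "0 < m" and beta: "0 < \<beta>" "\<beta> < 1"
    using assms(1-3) by simp_all
  obtain x0 where x0: "x0 \<in> tree m" "u x0 \<noteq> 0"
    and eq: "\<forall>x\<in>tree m. - Delta m \<beta> u x = lam * u x"
    and lim: "\<forall>X. branch m X \<longrightarrow> (\<lambda>n. u (X n)) \<longlonglongrightarrow> 0"
    using assms(7) unfolding eigenfunction_def by blast
  let ?V = "level_mean m u"
  have nonneg: "\<And>x. x \<in> tree m \<Longrightarrow> 0 \<le> u x"
    using assms(8) by blast
  have decreasing: "?V (Suc n) < ?V n" for n
    using level_mean_strict_decreasing[OF m beta assms(4) eq nonneg x0] .
  have pos: "0 < ?V n" for n
    using decreasing[of n] level_mean_nonneg[of m u "Suc n"] nonneg by fastforce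
  have "eigenfunction m \<beta> lam (\<lambda>x. ?V (length x))"
    using radial_eigenfunction[OF m beta level_mean_root[OF eq] level_mean_recurrence[OF m beta eq]]
      pos[of 0] level_mean_tendsto_zero[OF m beta eq lim pos] by simp
  moreover have "?V j < ?V i" if "i < j" for i j
    using lift_Suc_mono_less[of "\<lambda>n. - ?V n", OF _ that] decreasing by simp
  ultimately show ?thesis
    using pos by (simp add: level_avg_eq_level_mean)
qed

end
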